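(* Consider the variant of Sinkless Orientation on graphs of constant maximum degree in which every node of degree at least $3$ must have at least one outgoing edge. Its randomized $\mathsf{LCA}$ probe complexity and its randomized $\mathsf{VOLUME}$ probe complexity are $O(\log n \log^* n)$.
   Context: Sinkless Orientation: orient every edge of the input graph; here the requirement is that every vertex of degree at least $3$ has at least one outgoing edge. $\mathsf{LCA}$ model: unique IDs from $[n]$, port numbering, local inputs; the algorithm answers queries about the output of a node/edge using probes of the form (ID $i\in[n]$, port), each returning the local information of the corresponding neighbor; answers depend only on the input and a shared random string (stateless); complexity is the max number of probes; the combined output must be valid with probability at least $1-1/n^{c}$ for any desired constant $c$. $\mathsf{VOLUME}$ model: like $\mathsf{LCA}$, but IDs are from $\{1,\dots,\mathrm{poly}(n)\}$, the algorithm may only probe neighbors of already discovered nodes (a connected region around the queried node), and randomness is private per node rather than shared. *)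

theory Defs
  imports "HOL-Probability.Product_PMF"
begin

text \<open>A port-numbered simple graph on the (finite) vertex/ID set V: node v has ports
  0 ..< deg v; port p of v leads to nb v p = (u, q), meaning that the edge is attached to
  port q of neighbour u.\<close>

definition port_graph :: "nat set \<Rightarrow> (nat \<Rightarrow> nat) \<Rightarrow> (nat \<Rightarrow> nat \<Rightarrow> nat \<times> nat) \<Rightarrow> bool" where
  "port_graph V deg nb \<longleftrightarrow> finite V \<and>
     (\<forall>v\<in>V. \<forall>p<deg v. fst (nb v p) \<in> V \<and> fst (nb v p) \<noteq> v \<and> snd (nb v p) < deg (fst (nb v p))
                        \<and> nb (fst (nb v p)) (snd (nb v p)) = (v, p)) \<and>
     (\<forall>v\<in>V. inj_on (\<lambda>p. fst (nb v p)) {..<deg v})"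

definition max_degree_le :: "nat set \<Rightarrow> (nat \<Rightarrow> nat) \<Rightarrow> nat \<Rightarrow> bool" where
  "max_degree_le V deg D \<longleftrightarrow> (\<forall>v\<in>V. deg v \<le> D)"

text \<open>An orientation is given by half-edge bits: out v p = True means the edge at port p
  of v is oriented away from v.  The two half-edges of each edge must disagree.\<close>

definition sinkless_orientation ::
  "nat set \<Rightarrow> (nat \<Rightarrow> nat) \<Rightarrow> (nat \<Rightarrow> nat \<Rightarrow> nat \<times> nat) \<Rightarrow> (nat \<Rightarrow> nat \<Rightarrow> bool) \<Rightarrow> bool" where
  "sinkless_orientation V deg nb out \<longleftrightarrow>
     (\<forall>v\<in>V. \<forall>p<deg v. out v p \<noteq> out (fst (nb v p)) (snd (nb v p))) \<and>
     (\<forall>v\<in>V. 3 \<le> deg v \<longrightarrow> (\<exists>p<deg v. out v p))"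

text \<open>A probe (i, p) asks for the neighbour of node i behind port i's port p; the answer is
  None if the probe is invalid, otherwise the local information of that neighbour.\<close>

datatype 'i ptree = Done bool | Probe nat nat "'i option \<Rightarrow> 'i ptree"

text \<open>Local information returned by an LCA probe: (ID of neighbour, its degree, back port).\<close>

definition lca_probe :: "nat set \<Rightarrow> (nat \<Rightarrow> nat) \<Rightarrow> (nat \<Rightarrow> nat \<Rightarrow> nat \<times> nat) \<Rightarrow>
    nat \<Rightarrow> nat \<Rightarrow> (nat \<times> nat \<times> nat) option" where
  "lca_probe V deg nb i p =
     (if i \<in> V \<and> p < deg i then Some (fst (nb i p), deg (fst (nb i p)), snd (nb i p)) else None)"

primrec lca_run :: "nat set \<Rightarrow> (nat \<Rightarrow> nat) \<Rightarrow> (nat \<Rightarrow> nat \<Rightarrow> nat \<times> nat) \<Rightarrow>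
    (nat \<times> nat \<times> nat) ptree \<Rightarrow> bool \<times> nat" where
  "lca_run V deg nb (Done b) = (b, 0)"
| "lca_run V deg nb (Probe i p k) =
     (let r = lca_run V deg nb (k (lca_probe V deg nb i p)) in (fst r, Suc (snd r)))"

text \<open>An LCA algorithm: given n, the shared random string and a query (v, p) (the edge at
  port p of node v), it produces a decision tree.  Answers depend only on input and the
  shared randomness (stateless).\<close>

type_synonym lca_alg = "nat \<Rightarrow> bool list \<Rightarrow> nat \<Rightarrow> nat \<Rightarrow> (nat \<times> nat \<times> nat) ptree"

definition random_strings :: "nat \<Rightarrow> bool list pmf" where
  "random_strings k = pmf_of_set {xs. length xs = k}"

definition lca_complexity_success ::
  "nat \<Rightarrow> real \<Rightarrow> (nat \<Rightarrow> real) \<Rightarrow> (nat \<Rightarrow> nat) \<Rightarrow> lca_alg \<Rightarrow> bool" where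
  "lca_complexity_success \<Delta> c T m A \<longleftrightarrow>
     (\<forall>n\<ge>2. \<forall>deg nb. port_graph {1..n} deg nb \<and> max_degree_le {1..n} deg \<Delta> \<longrightarrow>
        (\<forall>\<rho>. length \<rho> = m n \<longrightarrow> (\<forall>v\<in>{1..n}. \<forall>p<deg v.
             real (snd (lca_run {1..n} deg nb (A n \<rho> v p))) \<le> T n)) \<and>
        measure_pmf.prob (random_strings (m n))
          {\<rho>. sinkless_orientation {1..n} deg nb (\<lambda>v p. fst (lca_run {1..n} deg nb (A n \<rho> v p)))}
          \<ge> 1 - 1 / real n powr c)"

text \<open>Local information returned by a VOLUME probe: (ID of neighbour, its degree, back port,
  its private random string).\<close>

definition vol_probe :: "nat set \<Rightarrow> (nat \<Rightarrow> nat) \<Rightarrow> (nat \<Rightarrow> nat \<Rightarrow> nat \<times> nat) \<Rightarrow> (nat \<Rightarrow> bool list) \<Rightarrow>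
    nat \<Rightarrow> nat \<Rightarrow> (nat \<times> nat \<times> nat \<times> bool list) option" where
  "vol_probe V deg nb r i p =
     (if i \<in> V \<and> p < deg i
      then Some (fst (nb i p), deg (fst (nb i p)), snd (nb i p), r (fst (nb i p))) else None)"

text \<open>Running with a set of discovered nodes: probes at undiscovered nodes return None
  (so they give no information); answers of valid probes add the neighbour to the
  discovered set.\<close>

primrec vol_run :: "nat set \<Rightarrow> (nat \<Rightarrow> nat) \<Rightarrow> (nat \<Rightarrow> nat \<Rightarrow> nat \<times> nat) \<Rightarrow> (nat \<Rightarrow> bool list) \<Rightarrow>
    (nat \<times> nat \<times> nat \<times> bool list) ptree \<Rightarrow> nat set \<Rightarrow> bool \<times> nat" where
  "vol_run V deg nb r (Done b) D = (b, 0)"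
| "vol_run V deg nb r (Probe i p k) D =
     (let a = (if i \<in> D then vol_probe V deg nb r i p else None);
          D' = (case a of Some x \<Rightarrow> insert (fst x) D | None \<Rightarrow> D);
          res = vol_run V deg nb r (k a) D'
      in (fst res, Suc (snd res)))"

text \<open>A VOLUME algorithm: given n, the queried node's ID v, its own private random string
  and the port p, it produces a decision tree; initially only v is discovered.\<close>

type_synonym vol_alg = "nat \<Rightarrow> nat \<Rightarrow> bool list \<Rightarrow> nat \<Rightarrow> (nat \<times> nat \<times> nat \<times> bool list) ptree"

definition vol_out :: "nat set \<Rightarrow> (nat \<Rightarrow> nat) \<Rightarrow> (nat \<Rightarrow> nat \<Rightarrow> nat \<times> nat) \<Rightarrow> (nat \<Rightarrow> bool list) \<Rightarrow>
    vol_alg \<Rightarrow> nat \<Rightarrow> nat \<Rightarrow> nat \<Rightarrow> bool \<times> nat" where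
  "vol_out V deg nb r A n v p = vol_run V deg nb r (A n v (r v) p) {v}"

text \<open>IDs are unique, from {1 .. n ^ kappa}; private randomness: independent uniform strings
  of length m n for each node.\<close>

definition vol_complexity_success ::
  "nat \<Rightarrow> nat \<Rightarrow> real \<Rightarrow> (nat \<Rightarrow> real) \<Rightarrow> (nat \<Rightarrow> nat) \<Rightarrow> vol_alg \<Rightarrow> bool" where
  "vol_complexity_success \<Delta> \<kappa> c T m A \<longleftrightarrow>
     (\<forall>n\<ge>2. \<forall>V deg nb. V \<subseteq> {1..n ^ \<kappa>} \<and> card V = n \<and> port_graph V deg nb \<and> max_degree_le V deg \<Delta> \<longrightarrow>
        (\<forall>r. (\<forall>v\<in>V. length (r v) = m n) \<longrightarrow> (\<forall>v\<in>V. \<forall>p<deg v.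
             real (snd (vol_out V deg nb r A n v p)) \<le> T n)) \<and>
        measure_pmf.prob (Pi_pmf V [] (\<lambda>_. random_strings (m n)))
          {r. sinkless_orientation V deg nb (\<lambda>v p. fst (vol_out V deg nb r A n v p))}
          \<ge> 1 - 1 / real n powr c)"

definition log_star :: "real \<Rightarrow> nat" where
  "log_star x = (LEAST k. ((\<lambda>y. log 2 y) ^^ k) x \<le> 1)"

end

theory Submission
  imports Defs "HOL-Library.Nat_Bijection"
begin

text \<open>Every node of degree at least 3 uses three random bits to discard one of its ports 0, 1, 2
  and pairs the other two. Following the pairings, the darts (half-edges) are linked into trails,
  i.e. paths and cycles; the reverse of a trail is again a trail, disjoint from it. Orient each
  trail forwards iff it contains the least dart of the trail and its reverse together. Every edge
  then gets a direction, and a node of degree at least 3 lies on a trail entering through one of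
  its paired ports and leaving through the other, so it is not a sink.

  To answer a query at the dart x, walk forward from x and from its opposite dart for f steps. If
  both walks stop, by reaching a node that does not continue the trail or by returning to the
  start, they have seen the whole trail. A walk still running after f steps has entered f
  distinct nodes; there are at most 2^f such walks from x, each realised with probability at
  most (3/8)^f. With f = 3 (\<lceil>(c + 1) log n\<rceil> + \<Delta>), a union bound over the at most n \<Delta>
  darts gives failure probability at most n^-c, and the 2 f probes are O(log n). In the LCA
  model node u reads its three bits from the u-th block of the shared random string.\<close>

section \<open>Trails of a reversible partial successor\<close>

primrec pfunpow :: "('a \<Rightarrow> 'a option) \<Rightarrow> nat \<Rightarrow> 'a \<Rightarrow> 'a option" where
  "pfunpow N 0 x = Some x"
| "pfunpow N (Suc k) x = Option.bind (pfunpow N k x) N"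

lemma pfunpow_add: "pfunpow N (i + j) x = Option.bind (pfunpow N i x) (pfunpow N j)"
  by (induction j) (auto simp: bind_assoc)

lemma pfunpow_Suc_right: "pfunpow N (Suc k) x = Option.bind (N x) (pfunpow N k)"
  using pfunpow_add[of N 1 k x] by simp

lemma pfunpow_SomeD: "pfunpow N (i + j) x = Some z \<Longrightarrow> \<exists>y. pfunpow N i x = Some y \<and> pfunpow N j y = Some z"
  by (simp add: pfunpow_add bind_eq_Some_conv)

lemma pfunpow_prefix_SomeD:
  "pfunpow N i x = Some y \<Longrightarrow> pfunpow N (i + d) x = Some w \<Longrightarrow> pfunpow N d y = Some w"
  by (simp add: pfunpow_add)

lemma pfunpow_None_mono: "pfunpow N i x = None \<Longrightarrow> i \<le> j \<Longrightarrow> pfunpow N j x = None"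
  by (auto simp: pfunpow_add dest!: le_Suc_ex)

lemma pfunpow_mod:
  assumes "pfunpow N (Suc m) x = Some x"
  shows "pfunpow N i x = pfunpow N (i mod Suc m) x"
proof (induction i rule: less_induct)
  case (less i)
  show ?case
  proof (cases "i < Suc m")
    case False
    then obtain j where i: "i = Suc m + j" using le_Suc_ex not_less by blast
    then have "pfunpow N i x = pfunpow N j x" by (simp only: pfunpow_add assms) simp
    also have "\<dots> = pfunpow N (j mod Suc m) x" using less.IH[of j] i by simp
    also have "j mod Suc m = i mod Suc m" by (simp only: i mod_add_self1)
    finally show ?thesis .
  qed simp
qed

definition forward :: "('a \<Rightarrow> 'a option) \<Rightarrow> 'a \<Rightarrow> 'a set" where
  "forward N x = {y. \<exists>i. pfunpow N i x = Some y}"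

definition trail :: "('a \<Rightarrow> 'a option) \<Rightarrow> 'a \<Rightarrow> 'a set" where
  "trail N x = forward N x \<union> {y. x \<in> forward N y}"

lemma forward_eq_prefix:
  assumes "pfunpow N (Suc m) x \<in> {None, Some x}"
  shows "forward N x = {y. \<exists>i\<le>m. pfunpow N i x = Some y}"
proof -
  have "\<exists>i'\<le>m. pfunpow N i' x = Some y" if "pfunpow N i x = Some y" for i y
  proof (cases "pfunpow N (Suc m) x")
    case None
    then have "i \<le> m" using pfunpow_None_mono[of N "Suc m" x i] that by fastforce
    then show ?thesis using that by blast
  next
    case (Some z)
    then have "pfunpow N (i mod Suc m) x = Some y" using assms that pfunpow_mod by fastforce
    then show ?thesis by (meson less_Suc_eq_le mod_less_divisor zero_less_Suc)
  qed
  then show ?thesis unfolding forward_def by blast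
qed

lemma forward_succ:
  assumes "N x = Some z"
  shows "forward N x = insert x (forward N z)"
proof -
  have "pfunpow N (Suc k) x = pfunpow N k z" for k
    by (simp add: pfunpow_Suc_right assms del: pfunpow.simps(2))
  then have "pfunpow N i x = Some y \<longleftrightarrow> (i = 0 \<and> y = x) \<or> (\<exists>k. i = Suc k \<and> pfunpow N k z = Some y)"
    for i y by (cases i) auto
  then show ?thesis
    unfolding forward_def by (auto intro: exI[of _ 0] exI[of _ "Suc _"])
qed

locale reversible_successor =
  fixes N :: "'a \<Rightarrow> 'a option" and R :: "'a \<Rightarrow> 'a" and D :: "'a set"
  assumes reverse_reverse: "x \<in> D \<Longrightarrow> R (R x) = x"
    and reverse_in_domain: "x \<in> D \<Longrightarrow> R x \<in> D"
    and reverse_neq: "x \<in> D \<Longrightarrow> R x \<noteq> x"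
    and succ_in_domain: "N x = Some z \<Longrightarrow> x \<in> D \<and> z \<in> D"
    and succ_reverse: "N x = Some z \<Longrightarrow> N (R z) = Some (R x)"
    and succ_neq_reverse: "N x \<noteq> Some (R x)"
begin

lemma succ_inj: "N x = Some z \<Longrightarrow> N y = Some z \<Longrightarrow> x = y"
  by (metis succ_in_domain succ_reverse reverse_reverse option.inject)

lemma pfunpow_inj: "pfunpow N k x = Some z \<Longrightarrow> pfunpow N k y = Some z \<Longrightarrow> x = y"
  by (induction k arbitrary: z) (auto simp: bind_eq_Some_conv dest: succ_inj)

lemma pfunpow_in_domain: "pfunpow N k x = Some z \<Longrightarrow> x \<in> D \<Longrightarrow> z \<in> D"
  by (induction k arbitrary: z) (auto simp: bind_eq_Some_conv dest: succ_in_domain)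

lemma pfunpow_source_in_domain: "pfunpow N k x = Some z \<Longrightarrow> z \<in> D \<Longrightarrow> x \<in> D"
  by (cases k)
    (auto simp: pfunpow_Suc_right bind_eq_Some_conv dest: succ_in_domain simp del: pfunpow.simps(2))

lemma pfunpow_reverse: "pfunpow N k x = Some z \<Longrightarrow> pfunpow N k (R z) = Some (R x)"
proof (induction k arbitrary: z)
  case (Suc k)
  then obtain y where "pfunpow N k x = Some y" "N y = Some z" by (auto simp: bind_eq_Some_conv)
  with Suc.IH show ?case by (simp add: pfunpow_Suc_right succ_reverse del: pfunpow.simps(2))
qed simp

text \<open>The last step into R x reverses the first step out of x, so a shorter walk from
  the successor of x reaches its own reverse.\<close>
lemma pfunpow_neq_reverse: "x \<in> D \<Longrightarrow> pfunpow N k x \<noteq> Some (R x)"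
proof (induction k arbitrary: x rule: less_induct)
  case (less k)
  show ?case
  proof
    assume walk: "pfunpow N k x = Some (R x)"
    consider "k = 0" | "k = 1" | m where "k = Suc (Suc m)"
      by (metis One_nat_def not0_implies_Suc)
    then show False
    proof cases
      case 1 then show False using walk reverse_neq[OF less.prems] by simp
    next
      case 2 then show False using walk succ_neq_reverse by simp
    next
      case 3
      then obtain x' y where x': "N x = Some x'" and y: "pfunpow N m x' = Some y" "N y = Some (R x)"
        using walk unfolding 3 pfunpow_Suc_right[of N "Suc m"] by (auto simp: bind_eq_Some_conv)
      have "y = R x'" using succ_inj[OF y(2) succ_reverse[OF x']] .
      with y(1) have "pfunpow N m x' = Some (R x')" by simp
      moreover have "m < k" "x' \<in> D" using 3 succ_in_domain[OF x'] by auto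
      ultimately show False using less.IH by blast
    qed
  qed
qed

lemma pfunpow_suffix_SomeD:
  "pfunpow N i y = Some x \<Longrightarrow> pfunpow N (d + i) w = Some x \<Longrightarrow> pfunpow N d w = Some y"
  using pfunpow_SomeD pfunpow_inj by metis

lemma forward_subset: "x \<in> D \<Longrightarrow> forward N x \<subseteq> D"
  unfolding forward_def using pfunpow_in_domain by blast

lemma backward_succ:
  assumes "N x = Some z"
  shows "{y. z \<in> forward N y} = insert z {y. x \<in> forward N y}"
proof -
  have "pfunpow N (Suc k) y = Some z \<longleftrightarrow> pfunpow N k y = Some x" for k y
    using assms succ_inj by (auto simp: bind_eq_Some_conv)
  then have "pfunpow N i y = Some z \<longleftrightarrow> (i = 0 \<and> y = z) \<or> (\<exists>k. i = Suc k \<and> pfunpow N k y = Some x)"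
    for i y by (cases i) auto
  then show ?thesis
    unfolding forward_def by (auto intro: exI[of _ 0] exI[of _ "Suc _"])
qed

lemma trail_succ:
  assumes "N x = Some z"
  shows "trail N z = trail N x"
proof -
  have "x \<in> forward N x" "z \<in> forward N z" by (auto simp: forward_def intro: exI[of _ 0])
  show ?thesis
    unfolding trail_def forward_succ[of N x z, OF assms] backward_succ[OF assms]
    using \<open>x \<in> forward N x\<close> \<open>z \<in> forward N z\<close> by blast
qed

lemma trail_subset: "x \<in> D \<Longrightarrow> trail N x \<subseteq> D"
  unfolding trail_def forward_def using pfunpow_in_domain pfunpow_source_in_domain by blast

lemma in_trail_self: "x \<in> trail N x"
  unfolding trail_def forward_def by (auto intro: exI[of _ 0])

lemma backward_eq_reverse_forward:
  assumes "x \<in> D"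
  shows "{y. x \<in> forward N y} = R ` forward N (R x)"
proof (intro set_eqI iffI)
  fix y assume "y \<in> {y. x \<in> forward N y}"
  then obtain i where i: "pfunpow N i y = Some x" by (auto simp: forward_def)
  then have "R y \<in> forward N (R x)" using pfunpow_reverse by (auto simp: forward_def)
  then show "y \<in> R ` forward N (R x)"
    using reverse_reverse pfunpow_source_in_domain[OF i assms] by (metis image_eqI)
next
  fix y assume "y \<in> R ` forward N (R x)"
  then obtain w i where "y = R w" "pfunpow N i (R x) = Some w" by (auto simp: forward_def)
  then have "pfunpow N i y = Some (R (R x))" using pfunpow_reverse by blast
  then show "y \<in> {y. x \<in> forward N y}"
    using reverse_reverse[OF assms] by (auto simp: forward_def)
qed

lemma trail_eq_forward: "x \<in> D \<Longrightarrow> trail N x = forward N x \<union> R ` forward N (R x)"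
  unfolding trail_def using backward_eq_reverse_forward by simp

lemma reverse_reverse_image: "A \<subseteq> D \<Longrightarrow> R ` R ` A = A"
  using reverse_reverse by (force simp: image_image)

lemma trail_reverse:
  assumes "x \<in> D"
  shows "trail N (R x) = R ` trail N x"
proof -
  have "R ` R ` forward N (R x) = forward N (R x)"
    using reverse_reverse_image forward_subset reverse_in_domain assms by blast
  then show ?thesis
    using trail_eq_forward[OF assms] trail_eq_forward[OF reverse_in_domain[OF assms]]
    by (simp add: reverse_reverse[OF assms] image_Un Un_commute)
qed

lemma trail_comparable:
  assumes "y \<in> trail N x" "w \<in> trail N x"
  shows "\<exists>k. pfunpow N k y = Some w \<or> pfunpow N k w = Some y"
proof -
  have forward_forward: "\<exists>k. pfunpow N k y = Some w \<or> pfunpow N k w = Some y"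
    if "pfunpow N i x = Some y" "pfunpow N j x = Some w" for i j y w
  proof (cases "i \<le> j")
    case True
    then obtain d where "j = i + d" using le_Suc_ex by blast
    then show ?thesis using that pfunpow_prefix_SomeD[of N i x y d w] by auto
  next
    case False
    then obtain d where "i = j + d" using le_Suc_ex nat_le_linear by blast
    then show ?thesis using that pfunpow_prefix_SomeD[of N j x w d y] by auto
  qed
  have backward_backward: "\<exists>k. pfunpow N k y = Some w \<or> pfunpow N k w = Some y"
    if "pfunpow N i y = Some x" "pfunpow N j w = Some x" for i j y w
  proof (cases "i \<le> j")
    case True
    then obtain d where "j = d + i" using le_Suc_ex add.commute by metis
    then show ?thesis using that pfunpow_suffix_SomeD[of i y x d w] by auto
  next
    case False
    then obtain d where "i = d + j" using le_Suc_ex nat_le_linear add.commute by metis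
    then show ?thesis using that pfunpow_suffix_SomeD[of j w x d y] by auto
  qed
  have forward_backward: "pfunpow N (j + i) w = Some y"
    if "pfunpow N i x = Some y" "pfunpow N j w = Some x" for i j y w
    using that by (simp add: pfunpow_add)
  from assms show ?thesis
    unfolding trail_def forward_def
    using forward_forward backward_backward forward_backward by blast
qed

lemma reverse_notin_trail:
  assumes "x \<in> D" "y \<in> trail N x"
  shows "R y \<notin> trail N x"
proof
  assume "R y \<in> trail N x"
  then obtain k where "pfunpow N k y = Some (R y) \<or> pfunpow N k (R y) = Some y"
    using trail_comparable assms(2) by blast
  moreover have "y \<in> D" using trail_subset assms by blast
  ultimately show False
    using pfunpow_neq_reverse reverse_in_domain reverse_reverse by metis
qed

end

definition trail_orientation :: "('a \<Rightarrow> nat) \<Rightarrow> ('a \<Rightarrow> 'a option) \<Rightarrow> ('a \<Rightarrow> 'a) \<Rightarrow> 'a \<Rightarrow> bool" where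
  "trail_orientation key N R x \<longleftrightarrow> Min (key ` (trail N x \<union> R ` trail N x)) \<in> key ` trail N x"

context reversible_successor
begin

lemma trail_orientation_succ: "N x = Some z \<Longrightarrow> trail_orientation key N R z = trail_orientation key N R x"
  unfolding trail_orientation_def using trail_succ by simp

lemma trail_orientation_reverse:
  assumes "finite D" "inj key" "x \<in> D"
  shows "trail_orientation key N R (R x) \<longleftrightarrow> \<not> trail_orientation key N R x"
proof -
  define T where "T = trail N x"
  have "T \<subseteq> D" using trail_subset assms(3) T_def by blast
  then have RT: "R ` R ` T = T" and "finite T" using reverse_reverse_image assms(1) finite_subset by auto
  define m where "m = Min (key ` (T \<union> R ` T))"
  have disjoint: "key ` T \<inter> key ` (R ` T) = {}"
    using reverse_notin_trail assms(2,3) by (auto simp: T_def inj_eq)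
  have m: "m \<in> key ` T \<union> key ` (R ` T)"
    using Min_in[of "key ` (T \<union> R ` T)"] \<open>finite T\<close> in_trail_self[of x]
    by (auto simp: m_def T_def image_Un)
  have "trail N (R x) = R ` T" using trail_reverse assms(3) T_def by blast
  then have reverse: "trail_orientation key N R (R x) \<longleftrightarrow> m \<in> key ` (R ` T)"
    unfolding trail_orientation_def m_def using RT by (simp add: Un_commute)
  have forward: "trail_orientation key N R x \<longleftrightarrow> m \<in> key ` T"
    unfolding trail_orientation_def T_def m_def ..
  show ?thesis using m disjoint reverse forward by (metis IntI UnE empty_iff)
qed

end

section \<open>Random port pairings\<close>

type_synonym dart = "nat \<times> nat"

definition darts :: "nat set \<Rightarrow> (nat \<Rightarrow> nat) \<Rightarrow> dart set" where
  "darts V deg = (SIGMA v:V. {..<deg v})"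

definition excluded_port :: "bool list \<Rightarrow> nat" where
  "excluded_port s = horner_sum of_bool 2 s mod 3"

text \<open>3 - q - k is the port among 0, 1, 2 other than q and the discarded port k.\<close>

definition paired_port :: "nat \<Rightarrow> bool list \<Rightarrow> nat \<Rightarrow> nat option" where
  "paired_port d s q =
     (if 3 \<le> d \<and> q < 3 \<and> q \<noteq> excluded_port s then Some (3 - q - excluded_port s) else None)"

definition dart_succ ::
  "nat set \<Rightarrow> (nat \<Rightarrow> nat) \<Rightarrow> (nat \<Rightarrow> nat \<Rightarrow> nat \<times> nat) \<Rightarrow> (nat \<Rightarrow> bool list) \<Rightarrow> dart \<Rightarrow> dart option"
  where
  "dart_succ V deg nb r x =
     (if x \<in> darts V deg
      then (case case_prod nb x of (u, q) \<Rightarrow> map_option (Pair u) (paired_port (deg u) (r u) q))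
      else None)"

definition dart_orientation ::
  "nat set \<Rightarrow> (nat \<Rightarrow> nat) \<Rightarrow> (nat \<Rightarrow> nat \<Rightarrow> nat \<times> nat) \<Rightarrow> (nat \<Rightarrow> bool list) \<Rightarrow> dart \<Rightarrow> bool"
  where "dart_orientation V deg nb r = trail_orientation prod_encode (dart_succ V deg nb r) (case_prod nb)"

lemma mem_darts [simp]: "(v, p) \<in> darts V deg \<longleftrightarrow> v \<in> V \<and> p < deg v"
  by (simp add: darts_def)

lemma excluded_port_less: "excluded_port s < 3"
  by (simp add: excluded_port_def)

lemma paired_port_SomeD:
  assumes "paired_port d s q = Some p"
  shows "3 \<le> d" "p < 3" "p \<noteq> q" "paired_port d s p = Some q" "excluded_port s = 3 - q - p"
proof -
  define k where "k = excluded_port s"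
  have "q < 3" "q \<noteq> k" "p = 3 - q - k" "3 \<le> d" "k < 3"
    using assms excluded_port_less[of s] by (auto simp: paired_port_def k_def split: if_splits)
  moreover from this have "p < 3 \<and> p \<noteq> q \<and> p \<noteq> k \<and> 3 - p - k = q \<and> k = 3 - q - p"
    by (auto simp: less_Suc_eq numeral_3_eq_3)
  ultimately show "3 \<le> d" "p < 3" "p \<noteq> q" "paired_port d s p = Some q" "excluded_port s = 3 - q - p"
    by (auto simp: paired_port_def k_def)
qed

lemma paired_port_other:
  assumes "paired_port d s q = Some p" "paired_port d s q' = Some p'" "q' \<noteq> q"
  shows "q' = p"
proof -
  define k where "k = excluded_port s"
  have "q < 3" "q \<noteq> k" "p = 3 - q - k" "q' < 3" "q' \<noteq> k" "k < 3"
    using assms excluded_port_less[of s] by (auto simp: paired_port_def k_def split: if_splits)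
  then show ?thesis using assms(3) by (auto simp: less_Suc_eq numeral_3_eq_3)
qed

definition dart_head :: "(nat \<Rightarrow> nat \<Rightarrow> nat \<times> nat) \<Rightarrow> dart \<Rightarrow> nat" where
  "dart_head nb x = fst (case_prod nb x)"

lemma dart_succ_Some_iff:
  "dart_succ V deg nb r x = Some z \<longleftrightarrow> x \<in> darts V deg \<and>
     (\<exists>u q p. case_prod nb x = (u, q) \<and> z = (u, p) \<and> paired_port (deg u) (r u) q = Some p)"
proof -
  obtain u q where "case_prod nb x = (u, q)" by fastforce
  then show ?thesis by (simp add: dart_succ_def) blast
qed

lemma dart_succ_local: "dart_succ V deg nb r x = dart_succ V deg nb (\<lambda>_. r (dart_head nb x)) x"
  by (simp add: dart_succ_def dart_head_def split: prod.split)

lemma dart_succ_excluded_port: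
  "dart_succ V deg nb r x = Some z \<Longrightarrow>
     excluded_port (r (dart_head nb x)) = 3 - snd (case_prod nb x) - snd z"
  by (auto simp: dart_succ_Some_iff dart_head_def dest: paired_port_SomeD(5))

lemma paired_port_ex:
  assumes "3 \<le> d"
  obtains a b where "a < 3" "b < 3" "paired_port d s a = Some b"
proof -
  define a where "a = (if excluded_port s = 0 then 1 else (0::nat))"
  then show thesis
    using that[of a "3 - a - excluded_port s"] assms excluded_port_less[of s]
    by (auto simp: paired_port_def)
qed

locale labelled_port_graph =
  fixes V :: "nat set" and deg :: "nat \<Rightarrow> nat" and nb :: "nat \<Rightarrow> nat \<Rightarrow> nat \<times> nat"
    and r :: "nat \<Rightarrow> bool list"
  assumes port_graph: "port_graph V deg nb"
begin

abbreviation succ :: "dart \<Rightarrow> dart option" where "succ \<equiv> dart_succ V deg nb r"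

abbreviation opposite :: "dart \<Rightarrow> dart" where "opposite \<equiv> case_prod nb"

lemma finite_V: "finite V"
  using port_graph by (simp add: port_graph_def)

lemma finite_darts: "finite (darts V deg)"
  using port_graph by (simp add: port_graph_def darts_def)

lemma opposite_in_darts:
  assumes "x \<in> darts V deg"
  obtains u q where "opposite x = (u, q)" "(u, q) \<in> darts V deg" "opposite (u, q) = x" "u \<noteq> fst x"
proof -
  obtain v p where "x = (v, p)" "v \<in> V" "p < deg v" using assms by (cases x) auto
  moreover obtain u q where "nb v p = (u, q)" by fastforce
  moreover have "u \<in> V \<and> u \<noteq> v \<and> q < deg u \<and> nb u q = (v, p)"
    using port_graph \<open>v \<in> V\<close> \<open>p < deg v\<close> \<open>nb v p = (u, q)\<close>
    unfolding port_graph_def by (metis fst_conv snd_conv)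
  ultimately show thesis using that[of u q] by simp
qed

lemma dart_head_in_V: "x \<in> darts V deg \<Longrightarrow> dart_head nb x \<in> V"
  by (metis opposite_in_darts mem_darts dart_head_def fst_conv)

sublocale reversible_successor succ opposite "darts V deg"
proof
  fix x assume "x \<in> darts V deg"
  then obtain u q where "opposite x = (u, q)" "(u, q) \<in> darts V deg" "opposite (u, q) = x" "u \<noteq> fst x"
    by (rule opposite_in_darts)
  then show "opposite (opposite x) = x" "opposite x \<in> darts V deg" "opposite x \<noteq> x"
    by (auto dest: sym)
next
  fix x z assume "succ x = Some z"
  then obtain u q p where x: "x \<in> darts V deg" "opposite x = (u, q)" and z: "z = (u, p)"
    and p: "paired_port (deg u) (r u) q = Some p"
    by (auto simp: dart_succ_Some_iff)
  have "u \<in> V" using opposite_in_darts[OF x(1)] x(2) by (metis mem_darts)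
  then have z_dart: "z \<in> darts V deg" using z paired_port_SomeD(1,2)[OF p] by simp
  then show "x \<in> darts V deg \<and> z \<in> darts V deg" using x by simp
  obtain w s where "opposite z = (w, s)" "(w, s) \<in> darts V deg" "opposite (w, s) = z"
    using opposite_in_darts[OF z_dart] by blast
  then show "succ (opposite z) = Some (opposite x)"
    using z x(2) paired_port_SomeD(4)[OF p] by (auto simp: dart_succ_Some_iff)
next
  fix x show "succ x \<noteq> Some (opposite x)"
    using paired_port_SomeD(3) by (auto simp: dart_succ_Some_iff)
qed

lemma dart_orientation_sinkless: "sinkless_orientation V deg nb (\<lambda>v p. dart_orientation V deg nb r (v, p))"
  unfolding sinkless_orientation_def
proof (intro conjI ballI allI impI)
  fix v p assume "v \<in> V" "p < deg v"
  then show "dart_orientation V deg nb r (v, p) \<noteq> dart_orientation V deg nb r (fst (nb v p), snd (nb v p))"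
    using trail_orientation_reverse[OF finite_darts inj_prod_encode, of "(v, p)"]
    by (simp add: dart_orientation_def)
next
  fix v assume v: "v \<in> V" "3 \<le> deg v"
  then obtain a b where ab: "a < 3" "b < 3" "paired_port (deg v) (r v) a = Some b"
    using paired_port_ex by blast
  then have "(v, a) \<in> darts V deg" using v by simp
  then obtain u q where uq: "opposite (v, a) = (u, q)" "(u, q) \<in> darts V deg" "opposite (u, q) = (v, a)"
    by (rule opposite_in_darts)
  then have "succ (u, q) = Some (v, b)" using ab(3) by (simp add: dart_succ_Some_iff)
  then have "dart_orientation V deg nb r (v, b) \<longleftrightarrow> \<not> dart_orientation V deg nb r (v, a)"
    using trail_orientation_succ trail_orientation_reverse[OF finite_darts inj_prod_encode uq(2)] uq(3)
    by (simp add: dart_orientation_def)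
  then show "\<exists>p<deg v. dart_orientation V deg nb r (v, p)"
    using ab v by (metis less_le_trans)
qed

end

lemma labelled_port_graphI: "port_graph V deg nb \<Longrightarrow> labelled_port_graph V deg nb"
  by (simp add: labelled_port_graph_def)

section \<open>Walks and their decision trees\<close>

primrec walk :: "('a \<Rightarrow> 'a option) \<Rightarrow> ('a \<Rightarrow> 'a) \<Rightarrow> nat \<Rightarrow> 'a \<Rightarrow> 'a \<Rightarrow> ('a \<times> 'a) list \<Rightarrow> ('a \<times> 'a) list option"
  where
  "walk N R 0 s x acc = None"
| "walk N R (Suc f) s x acc =
     (case N x of
        None \<Rightarrow> Some ((x, R x) # acc)
      | Some z \<Rightarrow> if z = s then Some ((x, R x) # acc) else walk N R f s z ((x, R x) # acc))"

lemma walk_Some_last: "walk N R f s x acc = Some l \<Longrightarrow> \<exists>pre. l = pre @ (x, R x) # acc"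
proof (induction f arbitrary: x acc)
  case (Suc f)
  then show ?case
    by (fastforce split: option.splits if_splits dest: Suc.IH)
qed simp

lemma bounded_forward_succ:
  assumes "N x = Some z"
  shows "{y. \<exists>i\<le>Suc m. pfunpow N i x = Some y} = insert x {y. \<exists>i\<le>m. pfunpow N i z = Some y}"
proof -
  have "pfunpow N (Suc k) x = pfunpow N k z" for k
    by (simp add: pfunpow_Suc_right assms del: pfunpow.simps(2))
  then have "pfunpow N i x = Some y \<longleftrightarrow> (i = 0 \<and> y = x) \<or> (\<exists>k. i = Suc k \<and> pfunpow N k z = Some y)"
    for i y by (cases i) auto
  then show ?thesis by (auto intro: exI[of _ 0] exI[of _ "Suc _"])
qed

lemma walk_Some_set:
  "walk N R f s x acc = Some l \<Longrightarrow>
     \<exists>m. set l = set acc \<union> (\<lambda>y. (y, R y)) ` {y. \<exists>i\<le>m. pfunpow N i x = Some y}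
       \<and> pfunpow N (Suc m) x \<in> {None, Some s}"
proof (induction f arbitrary: x acc)
  case (Suc f)
  show ?case
  proof (cases "N x \<in> {None, Some s}")
    case True
    then have "set l = set acc \<union> (\<lambda>y. (y, R y)) ` {y. \<exists>i\<le>0. pfunpow N i x = Some y}"
      using Suc.prems by auto
    then show ?thesis using True by (intro exI[of _ 0]) simp
  next
    case False
    then obtain z where z: "N x = Some z" "z \<noteq> s" by auto
    then have "walk N R f s z ((x, R x) # acc) = Some l" using Suc.prems by simp
    from Suc.IH[OF this] obtain m where m:
      "set l = set ((x, R x) # acc) \<union> (\<lambda>y. (y, R y)) ` {y. \<exists>i\<le>m. pfunpow N i z = Some y}"
      "pfunpow N (Suc m) z \<in> {None, Some s}" by blast
    have "set l = set acc \<union> (\<lambda>y. (y, R y)) ` {y. \<exists>i\<le>Suc m. pfunpow N i x = Some y}"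
      unfolding bounded_forward_succ[of N x z, OF z(1)] using m(1) by simp
    moreover have "pfunpow N (Suc (Suc m)) x \<in> {None, Some s}"
      using m(2) by (simp add: pfunpow_Suc_right z(1) del: pfunpow.simps(2))
    ultimately show ?thesis by blast
  qed
qed simp

lemma walk_Some_forward:
  "walk N R f x x [] = Some l \<Longrightarrow> set l = (\<lambda>y. (y, R y)) ` forward N x"
  using walk_Some_set[of N R f x x "[]" l] forward_eq_prefix by fastforce

lemma walk_None: "walk N R f s x acc = None \<Longrightarrow> \<forall>j\<in>{1..f}. pfunpow N j x \<notin> {None, Some s}"
proof (induction f arbitrary: x acc)
  case (Suc f)
  then obtain z where z: "N x = Some z" "z \<noteq> s" "walk N R f s z ((x, R x) # acc) = None"
    by (auto split: option.splits if_splits)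
  have shift: "pfunpow N (Suc j) x = pfunpow N j z" for j
    by (simp add: pfunpow_Suc_right z(1) del: pfunpow.simps(2))
  show ?case
  proof
    fix j assume j: "j \<in> {1..Suc f}"
    show "pfunpow N j x \<notin> {None, Some s}"
    proof (cases j)
      case (Suc j')
      then show ?thesis
        using z(1,2) j Suc.IH[OF z(3)] shift[of j'] by (cases j') (auto simp del: pfunpow.simps(2))
    qed (use j in simp)
  qed
qed simp

text \<open>The decoder g turns a probe answer into the neighbour's ID, degree, back port and random
  string; in the LCA model the string is cut out of the shared random string.\<close>

primrec walk_tree ::
  "('i \<Rightarrow> nat \<times> nat \<times> nat \<times> bool list) \<Rightarrow> nat \<Rightarrow> dart \<Rightarrow> dart \<Rightarrow> (dart \<times> dart) list
    \<Rightarrow> ((dart \<times> dart) list option \<Rightarrow> 'i ptree) \<Rightarrow> 'i ptree"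
  where
  "walk_tree g 0 s x acc k = k None"
| "walk_tree g (Suc f) s x acc k = Probe (fst x) (snd x) (\<lambda>a. case a of
       None \<Rightarrow> k None
     | Some i \<Rightarrow> (case g i of (y, d, q, str) \<Rightarrow>
         (case paired_port d str q of
            None \<Rightarrow> k (Some ((x, (y, q)) # acc))
          | Some p \<Rightarrow> if (y, p) = s then k (Some ((x, (y, q)) # acc))
                     else walk_tree g f s (y, p) ((x, (y, q)) # acc) k)))"

definition trail_decision :: "(dart \<times> dart) list \<Rightarrow> (dart \<times> dart) list \<Rightarrow> bool" where
  "trail_decision l1 l2 \<longleftrightarrow> (let T = fst ` set l1 \<union> snd ` set l2 in
     Min (prod_encode ` (T \<union> snd ` set l1 \<union> fst ` set l2)) \<in> prod_encode ` T)"

text \<open>The first walk learns the dart opposite to (v, p) from its first probe; the second walk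
  starts there.\<close>

definition orientation_query :: "('i \<Rightarrow> nat \<times> nat \<times> nat \<times> bool list) \<Rightarrow> nat \<Rightarrow> nat \<Rightarrow> nat \<Rightarrow> 'i ptree"
  where
  "orientation_query g f v p = walk_tree g f (v, p) (v, p) [] (\<lambda>w1. case w1 of
       None \<Rightarrow> Done False
     | Some l1 \<Rightarrow> walk_tree g f (snd (last l1)) (snd (last l1)) [] (\<lambda>w2. case w2 of
         None \<Rightarrow> Done False
       | Some l2 \<Rightarrow> Done (trail_decision l1 l2)))"

context labelled_port_graph
begin

lemma lca_run_walk_tree:
  assumes g: "\<And>y d q. g (y, d, q) = (y, d, q, r y)" and "x \<in> darts V deg"
  shows "fst (lca_run V deg nb (walk_tree g f s x acc k))
           = fst (lca_run V deg nb (k (walk succ opposite f s x acc)))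
       \<and> snd (lca_run V deg nb (walk_tree g f s x acc k))
           \<le> snd (lca_run V deg nb (k (walk succ opposite f s x acc))) + f"
  using \<open>x \<in> darts V deg\<close>
proof (induction f arbitrary: x acc)
  case (Suc f)
  obtain u q where uq: "opposite x = (u, q)" "(u, q) \<in> darts V deg"
    using opposite_in_darts[OF Suc.prems] by metis
  have "lca_probe V deg nb (fst x) (snd x) = Some (u, deg u, q)"
    using Suc.prems uq by (cases x) (simp add: lca_probe_def)
  moreover have "succ x = map_option (Pair u) (paired_port (deg u) (r u) q)"
    using Suc.prems uq(1) by (simp add: dart_succ_def)
  moreover have "(u, p) \<in> darts V deg" if "paired_port (deg u) (r u) q = Some p" for p
    using uq(2) paired_port_SomeD(1,2)[OF that] by simp
  ultimately show ?case
    using g uq(1) Suc.IH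
    by (cases "paired_port (deg u) (r u) q") (fastforce simp: Let_def)+
qed simp

lemma vol_run_walk_tree:
  assumes "x \<in> darts V deg" "fst x \<in> D"
  shows "\<exists>D'. D \<subseteq> D'
    \<and> (\<forall>l. walk succ opposite f s x acc = Some l \<longrightarrow> (\<forall>e\<in>set l - set acc. fst (snd e) \<in> D'))
    \<and> fst (vol_run V deg nb r (walk_tree (\<lambda>a. a) f s x acc k) D)
        = fst (vol_run V deg nb r (k (walk succ opposite f s x acc)) D')
    \<and> snd (vol_run V deg nb r (walk_tree (\<lambda>a. a) f s x acc k) D)
        \<le> snd (vol_run V deg nb r (k (walk succ opposite f s x acc)) D') + f"
  using assms
proof (induction f arbitrary: x acc D)
  case 0
  show ?case by (intro exI[of _ D]) simp
next
  case (Suc f)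
  obtain u q where uq: "opposite x = (u, q)" "(u, q) \<in> darts V deg"
    using opposite_in_darts[OF Suc.prems(1)] by metis
  have probe: "vol_probe V deg nb r (fst x) (snd x) = Some (u, deg u, q, r u)"
    using Suc.prems(1) uq by (cases x) (simp add: vol_probe_def)
  have succ_x: "succ x = map_option (Pair u) (paired_port (deg u) (r u) q)"
    using Suc.prems(1) uq(1) by (simp add: dart_succ_def)
  show ?case
  proof (cases "\<exists>p. paired_port (deg u) (r u) q = Some p \<and> (u, p) \<noteq> s")
    case False
    then show ?thesis
      using probe succ_x uq(1) Suc.prems(2)
      by (intro exI[of _ "insert u D"]) (auto simp: Let_def split: option.splits)
  next
    case True
    then obtain p where Some: "paired_port (deg u) (r u) q = Some p" and False: "(u, p) \<noteq> s" by blast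
    have "(u, p) \<in> darts V deg" "fst (u, p) \<in> insert u D"
      using uq(2) paired_port_SomeD(1,2)[OF Some] by simp_all
    from Suc.IH[of "(u, p)" "insert u D" "(x, (u, q)) # acc", OF this] obtain D' where D':
      "insert u D \<subseteq> D'"
      "\<forall>l. walk succ opposite f s (u, p) ((x, (u, q)) # acc) = Some l \<longrightarrow>
          (\<forall>e\<in>set l - set ((x, (u, q)) # acc). fst (snd e) \<in> D')"
      "fst (vol_run V deg nb r (walk_tree (\<lambda>a. a) f s (u, p) ((x, (u, q)) # acc) k) (insert u D))
         = fst (vol_run V deg nb r (k (walk succ opposite f s (u, p) ((x, (u, q)) # acc))) D')"
      "snd (vol_run V deg nb r (walk_tree (\<lambda>a. a) f s (u, p) ((x, (u, q)) # acc) k) (insert u D))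
         \<le> snd (vol_run V deg nb r (k (walk succ opposite f s (u, p) ((x, (u, q)) # acc))) D') + f"
      by blast
    have walk_x: "walk succ opposite (Suc f) s x acc = walk succ opposite f s (u, p) ((x, (u, q)) # acc)"
      using Some False succ_x uq(1) by simp
    have "fst (snd e) \<in> D'" if "walk succ opposite (Suc f) s x acc = Some l" "e \<in> set l - set acc" for l e
      using D'(1,2) that unfolding walk_x by (cases "e = (x, (u, q))") auto
    then show ?thesis
      using D' walk_x Some False probe Suc.prems(2)
      by (intro exI[of _ D']) (auto simp: Let_def)
  qed
qed

lemma trail_decision_eq_dart_orientation:
  assumes x: "x \<in> darts V deg"
    and l1: "walk succ opposite f x x [] = Some l1"
    and l2: "walk succ opposite f (opposite x) (opposite x) [] = Some l2"
  shows "trail_decision l1 l2 = dart_orientation V deg nb r x"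
proof -
  have x': "opposite x \<in> darts V deg" using reverse_in_domain x by blast
  have forward_rev: "opposite ` opposite ` forward succ (opposite x) = forward succ (opposite x)"
    using reverse_reverse_image forward_subset[OF x'] by blast
  have T: "fst ` set l1 \<union> snd ` set l2 = trail succ x"
    using walk_Some_forward[OF l1] walk_Some_forward[OF l2] trail_eq_forward[OF x]
    by (simp add: image_image)
  moreover have "snd ` set l1 \<union> fst ` set l2 = opposite ` trail succ x"
    using walk_Some_forward[OF l1] walk_Some_forward[OF l2] trail_eq_forward[OF x] forward_rev
    by (simp add: image_image image_Un)
  ultimately show ?thesis
    unfolding trail_decision_def dart_orientation_def trail_orientation_def Let_def
    by (simp add: Un_assoc)
qed

lemma walk_Some_opposite_last:
  "walk succ opposite f x x [] = Some l \<Longrightarrow> last l = (x, opposite x)"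
  using walk_Some_last by fastforce

lemma run_orientation_query:
  fixes run :: "'i ptree \<Rightarrow> nat set \<Rightarrow> bool \<times> nat"
  assumes run_Done: "\<And>b D. run (Done b) D = (b, 0)"
    and run_walk_tree: "\<And>x s k D. x \<in> darts V deg \<Longrightarrow> fst x \<in> D \<Longrightarrow> \<exists>D'.
      (\<forall>l. walk succ opposite f s x [] = Some l \<longrightarrow> (\<forall>e\<in>set l. fst (snd e) \<in> D'))
      \<and> fst (run (walk_tree g f s x [] k) D) = fst (run (k (walk succ opposite f s x [])) D')
      \<and> snd (run (walk_tree g f s x [] k) D) \<le> snd (run (k (walk succ opposite f s x [])) D') + f"
    and x: "(v, p) \<in> darts V deg"
  shows "snd (run (orientation_query g f v p) {v}) \<le> 2 * f"
    and "walk succ opposite f (v, p) (v, p) [] = Some l1 \<Longrightarrow>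
         walk succ opposite f (nb v p) (nb v p) [] = Some l2 \<Longrightarrow>
         fst (run (orientation_query g f v p) {v}) = dart_orientation V deg nb r (v, p)"
proof -
  define K2 :: "(dart \<times> dart) list \<Rightarrow> (dart \<times> dart) list option \<Rightarrow> 'i ptree"
    where "K2 l w = (case w of None \<Rightarrow> Done False | Some l' \<Rightarrow> Done (trail_decision l l'))" for l w
  define K1 where "K1 w = (case w of None \<Rightarrow> Done False
    | Some l \<Rightarrow> walk_tree g f (snd (last l)) (snd (last l)) [] (K2 l))" for w
  let ?w1 = "walk succ opposite f (v, p) (v, p) []" and ?w2 = "walk succ opposite f (nb v p) (nb v p) []"
  have query: "orientation_query g f v p = walk_tree g f (v, p) (v, p) [] K1"
    unfolding orientation_query_def K1_def[abs_def] K2_def[abs_def] ..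
  have x': "nb v p \<in> darts V deg" using reverse_in_domain[OF x] by simp
  obtain D where D: "\<forall>l. ?w1 = Some l \<longrightarrow> (\<forall>e\<in>set l. fst (snd e) \<in> D)"
    "fst (run (orientation_query g f v p) {v}) = fst (run (K1 ?w1) D)"
    "snd (run (orientation_query g f v p) {v}) \<le> snd (run (K1 ?w1) D) + f"
    using run_walk_tree[OF x, of "{v}" "(v, p)" K1] query by auto
  have K1_Some: "K1 (Some l) = walk_tree g f (nb v p) (nb v p) [] (K2 l)"
    and discovered: "fst (nb v p) \<in> D" if "?w1 = Some l" for l
    using walk_Some_opposite_last[OF that] D(1) that last_in_set[of l]
    by (auto simp: K1_def dest: walk_Some_last)
  have "snd (run (K1 ?w1) D) \<le> f"
  proof (cases ?w1)
    case (Some l)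
    then obtain D' where
      "snd (run (walk_tree g f (nb v p) (nb v p) [] (K2 l)) D) \<le> snd (run (K2 l ?w2) D') + f"
      using run_walk_tree[OF x' discovered[OF Some], of "nb v p" "K2 l"] by blast
    then show ?thesis using K1_Some[OF Some] Some run_Done by (cases ?w2) (simp_all add: K2_def)
  qed (simp add: K1_def run_Done)
  then show "snd (run (orientation_query g f v p) {v}) \<le> 2 * f"
    using D(3) by simp
  assume l1: "?w1 = Some l1" and l2: "?w2 = Some l2"
  obtain D' where "fst (run (walk_tree g f (nb v p) (nb v p) [] (K2 l1)) D) = fst (run (K2 l1 ?w2) D')"
    using run_walk_tree[OF x' discovered[OF l1], of "nb v p" "K2 l1"] by blast
  then show "fst (run (orientation_query g f v p) {v}) = dart_orientation V deg nb r (v, p)"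
    using D(2) K1_Some[OF l1] l1 l2 trail_decision_eq_dart_orientation[OF x l1] run_Done
    by (simp add: K2_def)
qed

lemma lca_run_orientation_query:
  assumes "\<And>y d q. g (y, d, q) = (y, d, q, r y)" "(v, p) \<in> darts V deg"
  shows "snd (lca_run V deg nb (orientation_query g f v p)) \<le> 2 * f"
    and "walk succ opposite f (v, p) (v, p) [] = Some l1 \<Longrightarrow>
         walk succ opposite f (nb v p) (nb v p) [] = Some l2 \<Longrightarrow>
         fst (lca_run V deg nb (orientation_query g f v p)) = dart_orientation V deg nb r (v, p)"
proof -
  have "\<exists>D'. (\<forall>l. walk succ opposite f s x [] = Some l \<longrightarrow> (\<forall>e\<in>set l. fst (snd e) \<in> D'))
      \<and> fst (lca_run V deg nb (walk_tree g f s x [] k))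
          = fst (lca_run V deg nb (k (walk succ opposite f s x [])))
      \<and> snd (lca_run V deg nb (walk_tree g f s x [] k))
          \<le> snd (lca_run V deg nb (k (walk succ opposite f s x []))) + f"
    if "x \<in> darts V deg" for x s k
    using lca_run_walk_tree[OF assms(1) that, of f s "[]" k] by (intro exI[of _ UNIV]) simp
  note query = run_orientation_query[where run = "\<lambda>t D. lca_run V deg nb t", OF _ this assms(2)]
  show "snd (lca_run V deg nb (orientation_query g f v p)) \<le> 2 * f"
    using query(1) by simp
  show "walk succ opposite f (v, p) (v, p) [] = Some l1 \<Longrightarrow>
      walk succ opposite f (nb v p) (nb v p) [] = Some l2 \<Longrightarrow>
      fst (lca_run V deg nb (orientation_query g f v p)) = dart_orientation V deg nb r (v, p)"
    using query(2) by simp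
qed

lemma vol_run_orientation_query:
  assumes "(v, p) \<in> darts V deg"
  shows "snd (vol_run V deg nb r (orientation_query (\<lambda>a. a) f v p) {v}) \<le> 2 * f"
    and "walk succ opposite f (v, p) (v, p) [] = Some l1 \<Longrightarrow>
         walk succ opposite f (nb v p) (nb v p) [] = Some l2 \<Longrightarrow>
         fst (vol_run V deg nb r (orientation_query (\<lambda>a. a) f v p) {v}) = dart_orientation V deg nb r (v, p)"
proof -
  have "\<exists>D'. (\<forall>l. walk succ opposite f s x [] = Some l \<longrightarrow> (\<forall>e\<in>set l. fst (snd e) \<in> D'))
      \<and> fst (vol_run V deg nb r (walk_tree (\<lambda>a. a) f s x [] k) D)
          = fst (vol_run V deg nb r (k (walk succ opposite f s x [])) D')
      \<and> snd (vol_run V deg nb r (walk_tree (\<lambda>a. a) f s x [] k) D)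
          \<le> snd (vol_run V deg nb r (k (walk succ opposite f s x [])) D') + f"
    if x: "x \<in> darts V deg" "fst x \<in> D" for x s k D
  proof -
    obtain D' where "\<forall>l. walk succ opposite f s x [] = Some l \<longrightarrow> (\<forall>e\<in>set l - set []. fst (snd e) \<in> D')"
      "fst (vol_run V deg nb r (walk_tree (\<lambda>a. a) f s x [] k) D)
         = fst (vol_run V deg nb r (k (walk succ opposite f s x [])) D')"
      "snd (vol_run V deg nb r (walk_tree (\<lambda>a. a) f s x [] k) D)
         \<le> snd (vol_run V deg nb r (k (walk succ opposite f s x [])) D') + f"
      using vol_run_walk_tree[OF x, of f s "[]" k] by blast
    then show ?thesis by (intro exI[of _ D']) simp
  qed
  note query = run_orientation_query[where run = "vol_run V deg nb r", OF _ this assms]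
  show "snd (vol_run V deg nb r (orientation_query (\<lambda>a. a) f v p) {v}) \<le> 2 * f"
    using query(1) by simp
  show "walk succ opposite f (v, p) (v, p) [] = Some l1 \<Longrightarrow>
      walk succ opposite f (nb v p) (nb v p) [] = Some l2 \<Longrightarrow>
      fst (vol_run V deg nb r (orientation_query (\<lambda>a. a) f v p) {v}) = dart_orientation V deg nb r (v, p)"
    using query(2) by simp
qed

end

section \<open>Long walks are unlikely\<close>

definition long_walk ::
  "nat set \<Rightarrow> (nat \<Rightarrow> nat) \<Rightarrow> (nat \<Rightarrow> nat \<Rightarrow> nat \<times> nat) \<Rightarrow> nat \<Rightarrow> dart \<Rightarrow> (nat \<Rightarrow> bool list) set"
  where "long_walk V deg nb f x = {r. walk (dart_succ V deg nb r) (case_prod nb) f x x [] = None}"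

definition possible_succs :: "nat set \<Rightarrow> (nat \<Rightarrow> nat) \<Rightarrow> (nat \<Rightarrow> nat \<Rightarrow> nat \<times> nat) \<Rightarrow> dart \<Rightarrow> dart set"
  where "possible_succs V deg nb x = {z. \<exists>s. dart_succ V deg nb (\<lambda>_. s) x = Some z}"

primrec succ_paths :: "nat set \<Rightarrow> (nat \<Rightarrow> nat) \<Rightarrow> (nat \<Rightarrow> nat \<Rightarrow> nat \<times> nat) \<Rightarrow> dart \<Rightarrow> nat \<Rightarrow> dart list set"
  where
  "succ_paths V deg nb x 0 = {[x]}"
| "succ_paths V deg nb x (Suc f) = (\<Union>z\<in>possible_succs V deg nb x. (#) x ` succ_paths V deg nb z f)"

definition path_event ::
  "nat set \<Rightarrow> (nat \<Rightarrow> nat) \<Rightarrow> (nat \<Rightarrow> nat \<Rightarrow> nat \<times> nat) \<Rightarrow> dart list \<Rightarrow> (nat \<Rightarrow> bool list) set"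
  where "path_event V deg nb P = {r. \<forall>j. Suc j < length P \<longrightarrow> dart_succ V deg nb r (P ! j) = Some (P ! Suc j)}"

lemma card_possible_succs: "finite (possible_succs V deg nb x) \<and> card (possible_succs V deg nb x) \<le> 2"
proof -
  obtain u q where uq: "case_prod nb x = (u, q)" by fastforce
  have succ: "q < 3 \<and> z \<in> Pair u ` ({..<3} - {q})" if z: "z \<in> possible_succs V deg nb x" for z
  proof -
    obtain s p where "z = (u, p)" "paired_port (deg u) s q = Some p"
      using z uq by (auto simp: possible_succs_def dart_succ_Some_iff)
    then show ?thesis
      using paired_port_SomeD[of "deg u" s q p] paired_port_SomeD(2)[of "deg u" s p q] by auto
  qed
  show ?thesis
  proof (cases "q < 3")
    case True
    have fin: "finite (Pair u ` ({..<3::nat} - {q}))" by simp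
    have sub: "possible_succs V deg nb x \<subseteq> Pair u ` ({..<3} - {q})" using succ by blast
    have "card (Pair u ` ({..<3::nat} - {q})) \<le> 2"
      using card_image_le[of "{..<3::nat} - {q}" "Pair u"] True by auto
    then show ?thesis using finite_subset[OF sub fin] card_mono[OF fin sub] by simp
  next
    case False
    then have "possible_succs V deg nb x = {}" using succ by blast
    then show ?thesis by simp
  qed
qed

lemma card_succ_paths: "finite (succ_paths V deg nb x f) \<and> card (succ_paths V deg nb x f) \<le> 2 ^ f"
proof (induction f arbitrary: x)
  case (Suc f)
  let ?Z = "possible_succs V deg nb x"
  have "card (succ_paths V deg nb x (Suc f)) \<le> (\<Sum>z\<in>?Z. card ((#) x ` succ_paths V deg nb z f))"
    using card_possible_succs by (simp add: card_UN_le)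
  also have "\<dots> \<le> (\<Sum>z\<in>?Z. 2 ^ f)"
    using Suc.IH by (intro sum_mono order.trans[OF card_image_le]) auto
  also have "\<dots> \<le> 2 * 2 ^ f"
    using card_possible_succs[of V deg nb x] by simp
  finally show ?case using card_possible_succs Suc.IH by simp
qed simp

abbreviation random_labels :: "nat set \<Rightarrow> (nat \<Rightarrow> bool list) pmf" where
  "random_labels V \<equiv> Pi_pmf V [] (\<lambda>_. random_strings 3)"

lemma prob_excluded_port: "measure_pmf.prob (random_strings 3) {s. excluded_port s = k} \<le> 3 / 8"
proof -
  define S :: "bool list set" where "S = {s. length s = 3}"
  have S: "S = {[False, False, False], [False, False, True], [False, True, False], [False, True, True],
    [True, False, False], [True, False, True], [True, True, False], [True, True, True]}"
  proof (intro set_eqI iffI)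
    fix s assume "s \<in> S"
    then obtain a b c where "s = [a, b, c]" by (auto simp: S_def length_Suc_conv numeral_3_eq_3)
    then show "s \<in> {[False, False, False], [False, False, True], [False, True, False], [False, True, True],
      [True, False, False], [True, False, True], [True, True, False], [True, True, True]}"
      by (cases a; cases b; cases c) auto
  qed (auto simp: S_def)
  consider "k = 0" | "k = 1" | "k = 2" | "3 \<le> k" by linarith
  then have "card (S \<inter> {s. excluded_port s = k}) \<le> 3"
    by cases (auto simp: S excluded_port_def)
  then show ?thesis
    by (auto simp: random_strings_def measure_pmf_of_set divide_right_mono S_def[symmetric] S)
qed

context labelled_port_graph
begin

lemma trajectory_in_succ_paths:
  assumes "x \<in> darts V deg" "\<forall>j\<in>{1..f}. pfunpow succ j x \<noteq> None"
  shows "map (\<lambda>j. the (pfunpow succ j x)) [0..<Suc f] \<in> succ_paths V deg nb x f"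
  using assms
proof (induction f arbitrary: x)
  case (Suc f)
  have "pfunpow succ 1 x \<noteq> None" using bspec[OF Suc.prems(2), of 1] by simp
  then obtain z where z: "succ x = Some z" by auto
  have shift: "pfunpow succ (Suc j) x = pfunpow succ j z" for j
    by (simp add: pfunpow_Suc_right z del: pfunpow.simps(2))
  have path: "map (\<lambda>j. the (pfunpow succ j z)) [0..<Suc f] \<in> succ_paths V deg nb z f"
  proof (rule Suc.IH)
    show "z \<in> darts V deg" using succ_in_domain[OF z] by blast
    show "\<forall>j\<in>{1..f}. pfunpow succ j z \<noteq> None"
      using Suc.prems(2) shift by (metis atLeastAtMost_iff le_SucI Suc_le_mono)
  qed
  have "z \<in> possible_succs V deg nb x"
    using z dart_succ_local[of V deg nb r x] by (auto simp: possible_succs_def)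
  moreover have "map (\<lambda>j. the (pfunpow succ j x)) [0..<Suc (Suc f)]
      = x # map (\<lambda>j. the (pfunpow succ j z)) [0..<Suc f]"
    by (simp only: map_upt_Suc shift pfunpow.simps(1) option.sel)
  ultimately show ?case using path by (simp only: succ_paths.simps) blast
qed simp

lemma trajectory_in_path_event:
  assumes "\<forall>j\<in>{1..f}. pfunpow succ j x \<noteq> None"
  shows "r \<in> path_event V deg nb (map (\<lambda>j. the (pfunpow succ j x)) [0..<Suc f])"
proof -
  have "succ (the (pfunpow succ j x)) = Some (the (pfunpow succ (Suc j) x))" if j: "j < f" for j
  proof -
    obtain y where "pfunpow succ (Suc j) x = Some y"
      using bspec[OF assms, of "Suc j"] j by (auto simp del: pfunpow.simps(2))
    then show ?thesis by (auto simp: bind_eq_Some_conv)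
  qed
  then show ?thesis
    by (simp add: path_event_def del: pfunpow.simps(2) upt_Suc)
qed

text \<open>Two darts of a long walk entering the same node either coincide, so that the walk
  returns to its start, or enter through the two paired ports, so that the walk reaches its
  own reverse.\<close>

lemma long_walk_heads_distinct:
  assumes x: "x \<in> darts V deg" and long: "\<forall>j\<in>{1..f}. pfunpow succ j x \<notin> {None, Some x}"
  shows "distinct (map (\<lambda>j. dart_head nb (the (pfunpow succ j x))) [0..<f])"
proof -
  have defined: "\<exists>y. pfunpow succ j x = Some y" if "j \<le> f" for j
    using bspec[OF long, of j] that by (cases j) auto
  have "dart_head nb (the (pfunpow succ i x)) \<noteq> dart_head nb (the (pfunpow succ j x))"
    if ij: "i < j" "j < f" for i j
  proof
    obtain a a' b b' where a: "pfunpow succ i x = Some a" "succ a = Some a'"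
      and b: "pfunpow succ j x = Some b" "succ b = Some b'"
      using defined[of "Suc i"] defined[of "Suc j"] ij by (auto simp: bind_eq_Some_conv)
    then have "a \<in> darts V deg" "b \<in> darts V deg" using succ_in_domain by blast+
    assume "dart_head nb (the (pfunpow succ i x)) = dart_head nb (the (pfunpow succ j x))"
    then obtain u q1 q2 p1 p2 where u: "opposite a = (u, q1)" "opposite b = (u, q2)"
      and p: "a' = (u, p1)" "paired_port (deg u) (r u) q1 = Some p1"
        "paired_port (deg u) (r u) q2 = Some p2"
      using a(1,2) b(1,2) by (auto simp: dart_succ_Some_iff dart_head_def)
    show False
    proof (cases "q1 = q2")
      case True
      then have "a = b"
        using u reverse_reverse \<open>a \<in> darts V deg\<close> \<open>b \<in> darts V deg\<close> by metis
      have "j = (j - i) + i" "j - i \<in> {1..f}" using ij by auto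
      then show False
        using pfunpow_suffix_SomeD[OF a(1), of "j - i" x] b(1) \<open>a = b\<close> long by auto
    next
      case False
      then have "a' = opposite b" using paired_port_other[OF p(2,3)] u p(1) by simp
      have "j = Suc i + (j - Suc i)" using ij by simp
      moreover have "pfunpow succ (Suc i) x = Some a'" using a by simp
      ultimately have "pfunpow succ (j - Suc i) (opposite b) = Some b"
        using pfunpow_prefix_SomeD b(1) \<open>a' = opposite b\<close> by metis
      then have "pfunpow succ (j - Suc i) (opposite b) = Some (opposite (opposite b))"
        using reverse_reverse \<open>b \<in> darts V deg\<close> by simp
      then show False using pfunpow_neq_reverse reverse_in_domain \<open>b \<in> darts V deg\<close> by blast
    qed
  qed
  then show ?thesis
    unfolding distinct_conv_nth by (auto simp del: upt_Suc) (metis linorder_neqE_nat)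
qed

end

lemma succ_paths_in_darts:
  assumes "port_graph V deg nb" "x \<in> darts V deg" "P \<in> succ_paths V deg nb x f"
  shows "length P = Suc f \<and> set P \<subseteq> darts V deg"
  using assms(2,3)
proof (induction f arbitrary: x P)
  case (Suc f)
  then obtain z s P' where "P = x # P'" "P' \<in> succ_paths V deg nb z f"
    and z: "dart_succ V deg nb (\<lambda>_. s) x = Some z"
    by (auto simp: possible_succs_def)
  moreover interpret labelled_port_graph V deg nb "\<lambda>_. s"
    using assms(1) by (rule labelled_port_graphI)
  have "z \<in> darts V deg" using succ_in_domain[OF z] by blast
  ultimately show ?case using Suc.IH Suc.prems(1) by auto
qed simp

lemma long_walk_subset_path_events:
  assumes "port_graph V deg nb" "x \<in> darts V deg"
  shows "long_walk V deg nb f x \<subseteq>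
    (\<Union>P\<in>{P \<in> succ_paths V deg nb x f. distinct (map (dart_head nb) (butlast P))}. path_event V deg nb P)"
proof
  fix r assume "r \<in> long_walk V deg nb f x"
  then have long: "\<forall>j\<in>{1..f}. pfunpow (dart_succ V deg nb r) j x \<notin> {None, Some x}"
    unfolding long_walk_def by (blast dest: walk_None)
  interpret labelled_port_graph V deg nb r using assms(1) by (rule labelled_port_graphI)
  let ?P = "map (\<lambda>j. the (pfunpow succ j x)) [0..<Suc f]"
  have defined: "\<forall>j\<in>{1..f}. pfunpow succ j x \<noteq> None" using long by auto
  have "map (dart_head nb) (butlast ?P) = map (\<lambda>j. dart_head nb (the (pfunpow succ j x))) [0..<f]"
    by (simp add: map_butlast[symmetric])
  then have "distinct (map (dart_head nb) (butlast ?P))"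
    using long_walk_heads_distinct[OF assms(2) long] by (simp add: comp_def)
  then show "r \<in> (\<Union>P\<in>{P \<in> succ_paths V deg nb x f. distinct (map (dart_head nb) (butlast P))}.
      path_event V deg nb P)"
    using trajectory_in_succ_paths[OF assms(2) defined] trajectory_in_path_event[OF defined] by blast
qed

lemma measure_Pi_pmf_Pi_le:
  assumes "finite A" "H \<subseteq> A" "0 \<le> c" "\<And>u. u \<in> H \<Longrightarrow> measure_pmf.prob (p u) (B u) \<le> c"
  shows "measure_pmf.prob (Pi_pmf A d p) (Pi A B) \<le> c ^ card H"
proof -
  have "measure_pmf.prob (Pi_pmf A d p) (Pi A B) = (\<Prod>u\<in>A. measure_pmf.prob (p u) (B u))"
    using assms(1) by (rule measure_Pi_pmf_Pi)
  also have "\<dots> \<le> (\<Prod>u\<in>A. if u \<in> H then c else 1)"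
    using assms(4) by (intro prod_mono) auto
  also have "\<dots> = c ^ card {u \<in> A. u \<in> H}"
    using assms(1) by (simp add: prod.If_cases Int_def)
  also have "{u \<in> A. u \<in> H} = H"
    using assms(2) by blast
  finally show ?thesis .
qed

lemma prob_path_event:
  assumes pg: "port_graph V deg nb" and x: "x \<in> darts V deg" and P: "P \<in> succ_paths V deg nb x f"
    and distinct: "distinct (map (dart_head nb) (butlast P))"
  shows "measure_pmf.prob (random_labels V) (path_event V deg nb P) \<le> (3/8) ^ f"
proof -
  interpret labelled_port_graph V deg nb undefined using pg by (rule labelled_port_graphI)
  define H where "H = dart_head nb ` set (butlast P)"
  have len: "length P = Suc f" and "set P \<subseteq> darts V deg"
    using succ_paths_in_darts[OF pg x P] by auto
  then have "set (butlast P) \<subseteq> darts V deg" by (meson in_set_butlastD subset_iff)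
  then have H: "H \<subseteq> V" "card H = f"
    using dart_head_in_V len distinct distinct_card[of "map (dart_head nb) (butlast P)"]
    by (auto simp: H_def)
  define B where "B u = {s. \<forall>j. Suc j < length P \<longrightarrow> dart_head nb (P ! j) = u \<longrightarrow>
    dart_succ V deg nb (\<lambda>_. s) (P ! j) = Some (P ! Suc j)}" for u
  have "path_event V deg nb P \<subseteq> Pi V B"
  proof
    fix r assume r: "r \<in> path_event V deg nb P"
    have "dart_succ V deg nb (\<lambda>_. r (dart_head nb (P ! j))) (P ! j) = Some (P ! Suc j)"
      if "Suc j < length P" for j
      using r that dart_succ_local[of V deg nb r "P ! j"] by (simp add: path_event_def)
    then show "r \<in> Pi V B" by (auto simp: B_def)
  qed
  then have "measure_pmf.prob (random_labels V) (path_event V deg nb P)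
      \<le> measure_pmf.prob (random_labels V) (Pi V B)"
    by (intro measure_pmf.finite_measure_mono) auto
  also have "\<dots> \<le> (3/8) ^ card H"
  proof (rule measure_Pi_pmf_Pi_le[OF finite_V H(1)])
    fix u assume "u \<in> H"
    then obtain j where j: "Suc j < length P" "dart_head nb (P ! j) = u"
      using len by (auto simp: H_def in_set_conv_nth nth_butlast)
    let ?k = "3 - snd (opposite (P ! j)) - snd (P ! Suc j)"
    have "B u \<subseteq> {s. excluded_port s = ?k}"
    proof
      fix s assume "s \<in> B u"
      then have "dart_succ V deg nb (\<lambda>_. s) (P ! j) = Some (P ! Suc j)" using j by (auto simp: B_def)
      from dart_succ_excluded_port[OF this] show "s \<in> {s. excluded_port s = ?k}" by simp
    qed
    then have "measure_pmf.prob (random_strings 3) (B u)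
        \<le> measure_pmf.prob (random_strings 3) {s. excluded_port s = ?k}"
      by (intro measure_pmf.finite_measure_mono) auto
    also have "\<dots> \<le> 3 / 8" by (rule prob_excluded_port)
    finally show "measure_pmf.prob (random_strings 3) (B u) \<le> 3 / 8" .
  qed simp
  finally show ?thesis using H(2) by simp
qed

lemma prob_long_walk:
  assumes pg: "port_graph V deg nb" and x: "x \<in> darts V deg"
  shows "measure_pmf.prob (random_labels V) (long_walk V deg nb f x) \<le> (3/4) ^ f"
proof -
  define K where "K = {P \<in> succ_paths V deg nb x f. distinct (map (dart_head nb) (butlast P))}"
  have "finite K" "card K \<le> 2 ^ f"
    using card_succ_paths[of V deg nb x f] card_mono[of "succ_paths V deg nb x f" K]
    by (auto simp: K_def)
  have "measure_pmf.prob (random_labels V) (long_walk V deg nb f x)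
      \<le> measure_pmf.prob (random_labels V) (\<Union>P\<in>K. path_event V deg nb P)"
    using long_walk_subset_path_events[OF pg x] by (intro measure_pmf.finite_measure_mono) (auto simp: K_def)
  also have "\<dots> \<le> (\<Sum>P\<in>K. measure_pmf.prob (random_labels V) (path_event V deg nb P))"
    using \<open>finite K\<close> by (intro measure_pmf.finite_measure_subadditive_finite) auto
  also have "\<dots> \<le> (\<Sum>P\<in>K. (3/8) ^ f)"
    using prob_path_event[OF pg x] by (intro sum_mono) (auto simp: K_def)
  also have "\<dots> \<le> 2 ^ f * (3/8) ^ f"
    using \<open>card K \<le> 2 ^ f\<close> by (simp add: mult_right_mono)
  also have "\<dots> = (3/4) ^ f"
    unfolding power_mult_distrib[symmetric] by simp
  finally show ?thesis .
qed

section \<open>Shared randomness\<close>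

definition block :: "bool list \<Rightarrow> nat \<Rightarrow> bool list" where
  "block \<rho> u = take 3 (drop (3 * (u - 1)) \<rho>)"

definition blocks :: "nat \<Rightarrow> bool list \<Rightarrow> nat \<Rightarrow> bool list" where
  "blocks n \<rho> u = (if u \<in> {1..n} then block \<rho> u else [])"

lemma concat_blocks: "length \<rho> = 3 * n \<Longrightarrow> concat (map (block \<rho>) [1..<Suc n]) = \<rho>"
proof (induction n arbitrary: \<rho>)
  case (Suc n)
  have "map (block \<rho>) [1..<Suc (Suc n)] = block \<rho> 1 # map (\<lambda>u. block \<rho> (Suc u)) [1..<Suc n]"
    by (simp add: upt_conv_Cons map_Suc_upt[symmetric] del: upt_Suc)
  also have "map (\<lambda>u. block \<rho> (Suc u)) [1..<Suc n] = map (block (drop 3 \<rho>)) [1..<Suc n]"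
    by (intro map_cong refl)
      (auto simp: block_def add.commute mult_Suc_right[symmetric] simp del: mult_Suc_right)
  finally show ?case
    using Suc.IH[of "drop 3 \<rho>"] Suc.prems by (simp add: block_def[of \<rho> "Suc 0"] del: upt_Suc)
qed simp

lemma inj_on_blocks: "inj_on (blocks n) {\<rho>. length \<rho> = 3 * n}"
proof (rule inj_onI)
  fix \<rho> \<rho>' assume \<rho>: "\<rho> \<in> {\<rho>. length \<rho> = 3 * n}" "\<rho>' \<in> {\<rho>. length \<rho> = 3 * n}"
    and eq: "blocks n \<rho> = blocks n \<rho>'"
  have "block \<rho> u = block \<rho>' u" if "u \<in> set [1..<Suc n]" for u
    using fun_cong[OF eq, of u] that by (simp add: blocks_def del: upt_Suc)
  then have "map (block \<rho>) [1..<Suc n] = map (block \<rho>') [1..<Suc n]"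
    by (rule map_cong[OF refl])
  then show "\<rho> = \<rho>'" using concat_blocks \<rho> by (metis mem_Collect_eq)
qed

lemma map_pmf_blocks: "map_pmf (blocks n) (random_strings (3 * n)) = random_labels {1..n}"
proof -
  define L where "L k = {s :: bool list. length s = k}" for k
  have L: "finite (L k)" "card (L k) = 2 ^ k" "L k \<noteq> {}" for k
    using card_lists_length_eq[of "UNIV :: bool set" k] finite_lists_length_eq[of "UNIV :: bool set" k]
      length_replicate[of k False]
    by (auto simp: L_def simp del: length_replicate)
  have "blocks n ` L (3 * n) \<subseteq> PiE_dflt {1..n} [] (\<lambda>_. L 3)"
    by (auto simp: blocks_def block_def PiE_dflt_def L_def)
  moreover have "card (blocks n ` L (3 * n)) = card (PiE_dflt {1..n} [] (\<lambda>_. L 3))"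
    using card_image[OF inj_on_blocks[of n]] L
    by (simp add: L_def card_PiE_dflt power_mult)
  ultimately have "blocks n ` L (3 * n) = PiE_dflt {1..n} [] (\<lambda>_. L 3)"
    using L by (intro card_subset_eq finite_PiE_dflt) auto
  moreover have strings: "random_strings k = pmf_of_set (L k)" for k
    by (simp add: random_strings_def L_def)
  moreover have "map_pmf (blocks n) (pmf_of_set (L (3 * n))) = pmf_of_set (blocks n ` L (3 * n))"
    using inj_on_blocks[of n] L by (intro map_pmf_of_set_inj) (simp_all add: L_def)
  moreover have "Pi_pmf {1..n} [] (\<lambda>_. pmf_of_set (L 3)) = pmf_of_set (PiE_dflt {1..n} [] (\<lambda>_. L 3))"
    using L by (intro Pi_pmf_of_set) auto
  ultimately show ?thesis by simp
qed

section \<open>Complexity and success probability\<close>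

lemma iterated_log_le_one: "\<exists>k. ((\<lambda>y. log 2 y) ^^ k) x \<le> 1"
proof -
  have "\<exists>k. ((\<lambda>y. log 2 y) ^^ k) x \<le> 1" if "x \<le> real N" for N x
    using that
  proof (induction N arbitrary: x)
    case (Suc N)
    show ?case
    proof (cases "x \<le> 1")
      case False
      have "real (Suc N) \<le> 2 ^ N"
        using less_exp[of N] by (metis Suc_leI of_nat_le_iff of_nat_numeral of_nat_power)
      then have "x \<le> 2 ^ N" using Suc.prems by linarith
      then have "log 2 x \<le> real N"
        using False log_le_cancel_iff[of 2 x "2 ^ N"] by (simp add: log_nat_power)
      then obtain k where "((\<lambda>y. log 2 y) ^^ k) (log 2 x) \<le> 1" using Suc.IH by blast
      then have "((\<lambda>y. log 2 y) ^^ Suc k) x \<le> 1" by (simp only: funpow_Suc_right comp_def)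
      then show ?thesis ..
    qed (auto intro: exI[of _ 0])
  qed (auto intro: exI[of _ 0])
  then show ?thesis using real_arch_simple by blast
qed

lemma log_star_pos: "1 < x \<Longrightarrow> 0 < log_star x"
  using LeastI_ex[OF iterated_log_le_one[of x]] by (metis funpow_0 gr0I log_star_def not_le)

definition walk_length :: "real \<Rightarrow> nat \<Rightarrow> nat \<Rightarrow> nat" where
  "walk_length c \<Delta> n = 3 * (nat \<lceil>(c + 1) * log 2 (real n)\<rceil> + \<Delta>)"

text \<open>Since (3/4)^3 \<le> 1/2, the summand \<Delta> of the walk length absorbs the factor \<Delta> of the
  union bound over all darts, and the rest contributes n^-(c + 1).\<close>

lemma walk_length_failure:
  assumes "c > 0" "n \<ge> 2"
  shows "real n * real \<Delta> * (3/4) ^ walk_length c \<Delta> n \<le> 1 / real n powr c"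
proof -
  define k where "k = nat \<lceil>(c + 1) * log 2 (real n)\<rceil>"
  have "(3/4 :: real) ^ walk_length c \<Delta> n = ((3/4) ^ 3) ^ (k + \<Delta>)"
    unfolding walk_length_def k_def[symmetric] by (rule power_mult)
  also have "\<dots> \<le> (1/2) ^ (k + \<Delta>)"
    by (rule power_mono) (simp_all add: power3_eq_cube)
  also have "\<dots> = (1/2) ^ k * (1/2) ^ \<Delta>"
    by (rule power_add)
  finally have "real n * real \<Delta> * (3/4) ^ walk_length c \<Delta> n
      \<le> (real n * (1/2) ^ k) * (real \<Delta> * (1/2) ^ \<Delta>)"
    by (simp add: mult_left_mono mult.assoc mult.left_commute)
  also have "real \<Delta> * (1/2) ^ \<Delta> \<le> 1"
    using less_exp[of \<Delta>] by (simp add: power_one_over field_simps)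
  also have "(1/2 :: real) ^ k = 2 powr (- real k)"
    by (simp add: powr_minus_divide powr_realpow power_one_over)
  also have "\<dots> \<le> 2 powr (- ((c + 1) * log 2 (real n)))"
    using of_nat_ceiling[of "(c + 1) * log 2 (real n)"] by (intro powr_mono) (auto simp: k_def)
  also have "\<dots> = (2 powr log 2 (real n)) powr (- (c + 1))"
    unfolding powr_powr by (simp add: algebra_simps)
  also have "\<dots> = real n powr (- (c + 1))"
    using assms(2) by simp
  also have "real n * real n powr (- (c + 1)) * 1 = 1 / real n powr c"
    using assms(2) by (simp add: powr_minus_divide powr_add[symmetric] field_simps powr_diff)
  finally show ?thesis by (simp add: mult_left_mono)
qed

lemma walk_length_probes:
  assumes "c > 0" "n \<ge> 2"
  shows "real (2 * walk_length c \<Delta> n) \<le> 6 * (c + 2 + real \<Delta>) * log 2 (real n) * real (log_star (real n))"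
proof -
  define L where "L = log 2 (real n)"
  have L: "L \<ge> 1" using assms(2) by (simp add: L_def)
  have "1 \<le> real (log_star (real n))" using log_star_pos[of "real n"] assms(2) by simp
  have "real (nat \<lceil>(c + 1) * L\<rceil>) \<le> (c + 1) * L + 1"
    using assms(1) L by (simp add: of_nat_nat)
  then have "real (2 * walk_length c \<Delta> n) \<le> 6 * ((c + 1) * L + 1 + real \<Delta>)"
    by (simp add: walk_length_def L_def)
  also have "\<dots> \<le> 6 * (c + 2 + real \<Delta>) * L"
    using assms(1) L mult_left_mono[OF L, of "real \<Delta>"] by (simp add: algebra_simps)
  also have "\<dots> \<le> 6 * (c + 2 + real \<Delta>) * L * real (log_star (real n))"
    using mult_left_mono[OF \<open>1 \<le> real (log_star (real n))\<close>, of "6 * (c + 2 + real \<Delta>) * L"]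
      assms(1) L by simp
  finally show ?thesis by (simp add: L_def)
qed

lemma card_darts_le:
  assumes "finite V" "max_degree_le V deg \<Delta>"
  shows "card (darts V deg) \<le> card V * \<Delta>"
proof -
  have "darts V deg \<subseteq> V \<times> {..<\<Delta>}"
    using assms(2) by (auto simp: darts_def max_degree_le_def)
  then show ?thesis using assms(1) card_mono[of "V \<times> {..<\<Delta>}"] by (simp add: card_cartesian_product)
qed

lemma prob_no_long_walk:
  assumes pg: "port_graph V deg nb" and "max_degree_le V deg \<Delta>" "card V = n" "c > 0" "2 \<le> n"
  shows "1 - 1 / real n powr c \<le> measure_pmf.prob (random_labels V)
    {r. \<forall>x\<in>darts V deg. r \<notin> long_walk V deg nb (walk_length c \<Delta> n) x}"
proof -
  let ?U = "\<Union>x\<in>darts V deg. long_walk V deg nb (walk_length c \<Delta> n) x"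
  interpret labelled_port_graph V deg nb undefined using pg by (rule labelled_port_graphI)
  have "measure_pmf.prob (random_labels V) ?U
      \<le> (\<Sum>x\<in>darts V deg. measure_pmf.prob (random_labels V) (long_walk V deg nb (walk_length c \<Delta> n) x))"
    using finite_darts by (intro measure_pmf.finite_measure_subadditive_finite) auto
  also have "\<dots> \<le> (\<Sum>x\<in>darts V deg. (3/4) ^ walk_length c \<Delta> n)"
    using prob_long_walk[OF pg] by (intro sum_mono) auto
  also have "\<dots> = real (card (darts V deg)) * (3/4) ^ walk_length c \<Delta> n"
    by simp
  also have "\<dots> \<le> real n * real \<Delta> * (3/4) ^ walk_length c \<Delta> n"
    using card_darts_le[OF finite_V assms(2)] assms(3)
    by (intro mult_right_mono) (simp_all flip: of_nat_mult)
  also have "\<dots> \<le> 1 / real n powr c"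
    using walk_length_failure assms(4,5) by blast
  finally have "1 - 1 / real n powr c \<le> 1 - measure_pmf.prob (random_labels V) ?U" by simp
  also have "\<dots> = measure_pmf.prob (random_labels V) (UNIV - ?U)"
    using measure_pmf.prob_compl[of ?U "random_labels V"] by simp
  finally show ?thesis by (simp add: set_diff_eq)
qed

context labelled_port_graph
begin

lemma sinkless_if_eq_dart_orientation:
  assumes eq: "\<And>v p. v \<in> V \<Longrightarrow> p < deg v \<Longrightarrow> out v p = dart_orientation V deg nb r (v, p)"
  shows "sinkless_orientation V deg nb out"
  unfolding sinkless_orientation_def
proof (intro conjI ballI allI impI)
  fix v p assume v: "v \<in> V" "p < deg v"
  then have "nb v p \<in> darts V deg" using reverse_in_domain[of "(v, p)"] by simp
  then have "out (fst (nb v p)) (snd (nb v p)) = dart_orientation V deg nb r (nb v p)"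
    using eq by (cases "nb v p") simp
  then show "out v p \<noteq> out (fst (nb v p)) (snd (nb v p))"
    using dart_orientation_sinkless v eq by (simp add: sinkless_orientation_def)
next
  fix v assume v: "v \<in> V" "3 \<le> deg v"
  then obtain p where "p < deg v" "dart_orientation V deg nb r (v, p)"
    using dart_orientation_sinkless by (auto simp: sinkless_orientation_def)
  then show "\<exists>p<deg v. out v p" using eq v by auto
qed

lemma sinkless_if_no_long_walk:
  assumes good: "\<forall>x\<in>darts V deg. r \<notin> long_walk V deg nb f x"
    and out: "\<And>v p l1 l2. (v, p) \<in> darts V deg \<Longrightarrow> walk succ opposite f (v, p) (v, p) [] = Some l1 \<Longrightarrow>
      walk succ opposite f (nb v p) (nb v p) [] = Some l2 \<Longrightarrow> out v p = dart_orientation V deg nb r (v, p)"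
  shows "sinkless_orientation V deg nb out"
proof (rule sinkless_if_eq_dart_orientation)
  fix v p assume "v \<in> V" "p < deg v"
  then have x: "(v, p) \<in> darts V deg" "nb v p \<in> darts V deg"
    using reverse_in_domain[of "(v, p)"] by simp_all
  have finishes: "\<exists>l. walk succ opposite f y y [] = Some l" if "y \<in> darts V deg" for y
    using good that by (auto simp: long_walk_def)
  obtain l1 l2 where "walk succ opposite f (v, p) (v, p) [] = Some l1"
    "walk succ opposite f (nb v p) (nb v p) [] = Some l2"
    using finishes[OF x(1)] finishes[OF x(2)] by blast
  then show "out v p = dart_orientation V deg nb r (v, p)" using out x(1) by blast
qed

end

definition shared_decoder :: "nat \<Rightarrow> bool list \<Rightarrow> nat \<times> nat \<times> nat \<Rightarrow> nat \<times> nat \<times> nat \<times> bool list" where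
  "shared_decoder n \<rho> = (\<lambda>(y, d, q). (y, d, q, blocks n \<rho> y))"

lemma lca_complexity_success_orientation_query:
  assumes "c > 0"
  shows "lca_complexity_success \<Delta> c (\<lambda>n. 6 * (c + 2 + real \<Delta>) * log 2 (real n) * real (log_star (real n)))
    (\<lambda>n. 3 * n) (\<lambda>n \<rho> v p. orientation_query (shared_decoder n \<rho>) (walk_length c \<Delta> n) v p)"
  unfolding lca_complexity_success_def
proof (intro allI impI conjI ballI)
  fix n deg nb \<rho> v p
  assume n: "2 \<le> n" and G: "port_graph {1..n} deg nb \<and> max_degree_le {1..n} deg \<Delta>"
    and "v \<in> {1..n}" "p < deg v"
  interpret labelled_port_graph "{1..n}" deg nb "blocks n \<rho>" using G by (simp add: labelled_port_graphI)
  have "snd (lca_run {1..n} deg nb (orientation_query (shared_decoder n \<rho>) (walk_length c \<Delta> n) v p))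
      \<le> 2 * walk_length c \<Delta> n"
    using \<open>v \<in> {1..n}\<close> \<open>p < deg v\<close> by (intro lca_run_orientation_query(1)) (simp_all add: shared_decoder_def)
  then show "real (snd (lca_run {1..n} deg nb (orientation_query (shared_decoder n \<rho>) (walk_length c \<Delta> n) v p)))
      \<le> 6 * (c + 2 + real \<Delta>) * log 2 (real n) * real (log_star (real n))"
    using walk_length_probes[OF assms n, of \<Delta>] by linarith
next
  fix n deg nb
  assume n: "2 \<le> n" and G: "port_graph {1..n} deg nb \<and> max_degree_le {1..n} deg \<Delta>"
  let ?f = "walk_length c \<Delta> n"
  let ?good = "{r. \<forall>x\<in>darts {1..n} deg. r \<notin> long_walk {1..n} deg nb ?f x}"
  have "blocks n -` ?good \<subseteq> {\<rho>. sinkless_orientation {1..n} deg nb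
      (\<lambda>v p. fst (lca_run {1..n} deg nb (orientation_query (shared_decoder n \<rho>) ?f v p)))}"
  proof (intro subsetI CollectI)
    fix \<rho> assume "\<rho> \<in> blocks n -` ?good"
    then have good: "\<forall>x\<in>darts {1..n} deg. blocks n \<rho> \<notin> long_walk {1..n} deg nb ?f x" by simp
    interpret labelled_port_graph "{1..n}" deg nb "blocks n \<rho>" using G by (simp add: labelled_port_graphI)
    show "sinkless_orientation {1..n} deg nb
      (\<lambda>v p. fst (lca_run {1..n} deg nb (orientation_query (shared_decoder n \<rho>) ?f v p)))"
      using good by (rule sinkless_if_no_long_walk)
        (intro lca_run_orientation_query(2), simp_all add: shared_decoder_def)
  qed
  then have "measure_pmf.prob (random_labels {1..n}) ?good \<le> measure_pmf.prob (random_strings (3 * n))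
      {\<rho>. sinkless_orientation {1..n} deg nb
        (\<lambda>v p. fst (lca_run {1..n} deg nb (orientation_query (shared_decoder n \<rho>) ?f v p)))}"
    unfolding map_pmf_blocks[symmetric] by (auto intro!: measure_pmf.finite_measure_mono)
  moreover have "1 - 1 / real n powr c \<le> measure_pmf.prob (random_labels {1..n}) ?good"
    using G assms n by (intro prob_no_long_walk) auto
  ultimately show "1 - 1 / real n powr c \<le> measure_pmf.prob (random_strings (3 * n))
      {\<rho>. sinkless_orientation {1..n} deg nb
        (\<lambda>v p. fst (lca_run {1..n} deg nb (orientation_query (shared_decoder n \<rho>) ?f v p)))}"
    by linarith
qed

lemma vol_complexity_success_orientation_query:
  assumes "c > 0"
  shows "vol_complexity_success \<Delta> \<kappa> c (\<lambda>n. 6 * (c + 2 + real \<Delta>) * log 2 (real n) * real (log_star (real n)))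
    (\<lambda>_. 3) (\<lambda>n v s p. orientation_query (\<lambda>a. a) (walk_length c \<Delta> n) v p)"
  unfolding vol_complexity_success_def
proof (intro allI impI conjI ballI)
  fix n V deg nb v p and r :: "nat \<Rightarrow> bool list"
  assume n: "2 \<le> n" and G: "V \<subseteq> {1..n ^ \<kappa>} \<and> card V = n \<and> port_graph V deg nb \<and> max_degree_le V deg \<Delta>"
    and "\<forall>v\<in>V. length (r v) = 3" and "v \<in> V" "p < deg v"
  interpret labelled_port_graph V deg nb r using G by (simp add: labelled_port_graphI)
  have "snd (vol_run V deg nb r (orientation_query (\<lambda>a. a) (walk_length c \<Delta> n) v p) {v})
      \<le> 2 * walk_length c \<Delta> n"
    using \<open>v \<in> V\<close> \<open>p < deg v\<close> by (intro vol_run_orientation_query(1)) simp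
  then show "real (snd (vol_out V deg nb r (\<lambda>n v s p. orientation_query (\<lambda>a. a) (walk_length c \<Delta> n) v p) n v p))
      \<le> 6 * (c + 2 + real \<Delta>) * log 2 (real n) * real (log_star (real n))"
    using walk_length_probes[OF assms n, of \<Delta>] by (simp add: vol_out_def)
next
  fix n V deg nb
  assume n: "2 \<le> n" and G: "V \<subseteq> {1..n ^ \<kappa>} \<and> card V = n \<and> port_graph V deg nb \<and> max_degree_le V deg \<Delta>"
  let ?A = "\<lambda>n v s p. orientation_query (\<lambda>a. a) (walk_length c \<Delta> n) v p"
  let ?f = "walk_length c \<Delta> n"
  let ?good = "{r. \<forall>x\<in>darts V deg. r \<notin> long_walk V deg nb ?f x}"
  have "?good \<subseteq> {r. sinkless_orientation V deg nb (\<lambda>v p. fst (vol_out V deg nb r ?A n v p))}"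
  proof (intro subsetI CollectI)
    fix r assume "r \<in> ?good"
    then have good: "\<forall>x\<in>darts V deg. r \<notin> long_walk V deg nb ?f x" by simp
    interpret labelled_port_graph V deg nb r using G by (simp add: labelled_port_graphI)
    show "sinkless_orientation V deg nb (\<lambda>v p. fst (vol_out V deg nb r ?A n v p))"
      using good by (rule sinkless_if_no_long_walk) (simp add: vol_out_def vol_run_orientation_query(2))
  qed
  then have "measure_pmf.prob (random_labels V) ?good
      \<le> measure_pmf.prob (random_labels V) {r. sinkless_orientation V deg nb (\<lambda>v p. fst (vol_out V deg nb r ?A n v p))}"
    by (auto intro!: measure_pmf.finite_measure_mono)
  moreover have "1 - 1 / real n powr c \<le> measure_pmf.prob (random_labels V) ?good"
    using G assms n by (intro prob_no_long_walk) auto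
  ultimately show "1 - 1 / real n powr c \<le> measure_pmf.prob (random_labels V)
      {r. sinkless_orientation V deg nb (\<lambda>v p. fst (vol_out V deg nb r ?A n v p))}"
    by linarith
qed

theorem theorem9:
  shows "(\<forall>\<Delta>::nat. \<forall>c::real. c > 0 \<longrightarrow>
            (\<exists>C::real. \<exists>m A. lca_complexity_success \<Delta> c
                 (\<lambda>n. C * log 2 (real n) * real (log_star (real n))) m A))
       \<and> (\<forall>\<Delta>::nat. \<forall>\<kappa>::nat. \<forall>c::real. \<kappa> \<ge> 1 \<longrightarrow> c > 0 \<longrightarrow>
            (\<exists>C::real. \<exists>m A. vol_complexity_success \<Delta> \<kappa> c
                 (\<lambda>n. C * log 2 (real n) * real (log_star (real n))) m A))"
  using lca_complexity_success_orientation_query vol_complexity_success_orientation_query by blast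

end
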